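(* Let $(X,d)$ be a complete metric space, let $N\in\mathbb{N}\setminus\{0\}$, let $\alpha:X\times X\rightarrow[0,+\infty)$ be $N$--transitive, and let $T:X\rightarrow X$ be an $\alpha$--contractive mapping of Meir--Keeler type satisfying: (A1) $T$ is $\alpha$--admissible; (A2) there exists $x_{0}\in X$ such that $\alpha(x_{0},Tx_{0})\geq1$; (A4) $(X,d)$ is $(T,\alpha)$--regular. Then $T$ has a fixed point.
   Context: $\mathbb{N}$ is the set of non-negative integers; $T^n$ is the $n$-th iterate of $T$. $T$ is an $\alpha$--contractive mapping of Meir--Keeler type if for every $\varepsilon>0$ there exists $\delta(\varepsilon)>0$ such that for all $x,y\in X$: $\varepsilon\leq d(x,y)<\varepsilon+\delta(\varepsilon)$ implies $\alpha(x,y)d(Tx,Ty)<\varepsilon$. $T$ is $\alpha$--admissible if $\alpha(x,y)\geq1$ implies $\alpha(Tx,Ty)\geq1$. $\alpha$ is $N$--transitive if for all $x_0,\dots,x_{N+1}\in X$ with $\alpha(x_i,x_{i+1})\geq1$ for all $i\in\{0,\dots,N\}$ one has $\alpha(x_0,x_{N+1})\geq1$. A sequence $\{x_n\}$ is $(T,\alpha)$--orbital if $x_n=T^nx_0$ and $\alpha(x_n,x_{n+1})\geq1$ for all $n\in\mathbb{N}$. $(X,d)$ is $(T,\alpha)$--regular if for every $(T,\alpha)$--orbital sequence $\{x_n\}$ with $x_n\rightarrow x\in X$ there exists a subsequence $\{x_{n(k)}\}$ with $\alpha(x_{n(k)},x)\geq1$ for all $k$. *)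

theory Defs
  imports "HOL-Analysis.Analysis"
begin

definition alpha_MK_contractive :: "('a::metric_space \<Rightarrow> 'a \<Rightarrow> real) \<Rightarrow> ('a \<Rightarrow> 'a) \<Rightarrow> bool" where
  "alpha_MK_contractive \<alpha> T \<longleftrightarrow>
     (\<forall>\<epsilon>>0. \<exists>\<delta>>0. \<forall>x y. \<epsilon> \<le> dist x y \<and> dist x y < \<epsilon> + \<delta> \<longrightarrow> \<alpha> x y * dist (T x) (T y) < \<epsilon>)"

definition alpha_admissible :: "('a \<Rightarrow> 'a \<Rightarrow> real) \<Rightarrow> ('a \<Rightarrow> 'a) \<Rightarrow> bool" where
  "alpha_admissible \<alpha> T \<longleftrightarrow> (\<forall>x y. \<alpha> x y \<ge> 1 \<longrightarrow> \<alpha> (T x) (T y) \<ge> 1)"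

definition N_transitive :: "nat \<Rightarrow> ('a \<Rightarrow> 'a \<Rightarrow> real) \<Rightarrow> bool" where
  "N_transitive N \<alpha> \<longleftrightarrow>
     (\<forall>x :: nat \<Rightarrow> 'a. (\<forall>i\<le>N. \<alpha> (x i) (x (Suc i)) \<ge> 1) \<longrightarrow> \<alpha> (x 0) (x (Suc N)) \<ge> 1)"

definition orbital :: "('a \<Rightarrow> 'a) \<Rightarrow> ('a \<Rightarrow> 'a \<Rightarrow> real) \<Rightarrow> (nat \<Rightarrow> 'a) \<Rightarrow> bool" where
  "orbital T \<alpha> xs \<longleftrightarrow> (\<forall>n. xs n = (T ^^ n) (xs 0)) \<and> (\<forall>n. \<alpha> (xs n) (xs (Suc n)) \<ge> 1)"

definition T_alpha_regular :: "('a::metric_space \<Rightarrow> 'a) \<Rightarrow> ('a \<Rightarrow> 'a \<Rightarrow> real) \<Rightarrow> bool" where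
  "T_alpha_regular T \<alpha> \<longleftrightarrow>
     (\<forall>(xs :: nat \<Rightarrow> 'a::metric_space) x. orbital T \<alpha> xs \<and> xs \<longlonglongrightarrow> x \<longrightarrow>
        (\<exists>r::nat\<Rightarrow>nat. strict_mono r \<and> (\<forall>k. \<alpha> (xs (r k)) x \<ge> 1)))"

end

theory Submission
  imports Defs
begin

text \<open>Along the orbit \<open>x n = (T ^^ n) x0\<close>, admissibility relates consecutive points and
  \<open>N\<close>-transitivity relates every pair \<open>x n, x (n + 1 + k * N)\<close>; on related pairs \<open>T\<close> does not
  increase distances and the Meir--Keeler condition applies. This forces the step lengths to
  tend to \<open>0\<close>. Once they are below \<open>\<delta> / (2 N)\<close>, an induction on \<open>k\<close> keeps
  \<open>dist (x K) (x (K + 1 + k * N)) < \<epsilon> + \<delta> / 2\<close>, and the at most \<open>N\<close> remaining steps cost another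
  \<open>\<delta> / 2\<close>, so the orbit is Cauchy. By regularity a subsequence is related to the limit \<open>z\<close>, and
  its image under \<open>T\<close> converges both to \<open>T z\<close> and to \<open>z\<close>.\<close>

lemma alpha_MK_contractive_dist_le:
  assumes "alpha_MK_contractive \<alpha> T" and "1 \<le> \<alpha> x y"
  shows "dist (T x) (T y) \<le> dist x y"
proof (cases "dist x y = 0")
  case False
  then have "dist x y > 0" by simp
  then obtain \<delta> where "\<delta> > 0"
    and "\<forall>a b. dist x y \<le> dist a b \<and> dist a b < dist x y + \<delta> \<longrightarrow> \<alpha> a b * dist (T a) (T b) < dist x y"
    using assms(1) unfolding alpha_MK_contractive_def by blast
  then have "\<alpha> x y * dist (T x) (T y) < dist x y" by auto
  moreover have "dist (T x) (T y) \<le> \<alpha> x y * dist (T x) (T y)"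
    using assms(2) by (simp add: mult_le_cancel_right1)
  ultimately show ?thesis by linarith
qed simp

lemma alpha_MK_contractiveD:
  assumes "alpha_MK_contractive \<alpha> T" and "\<epsilon> > 0"
  obtains \<delta> where "\<delta> > 0"
    and "\<And>x y. 1 \<le> \<alpha> x y \<Longrightarrow> dist x y < \<epsilon> + \<delta> \<Longrightarrow> dist (T x) (T y) < \<epsilon>"
proof -
  obtain \<delta> where "\<delta> > 0"
    and MK: "\<forall>x y. \<epsilon> \<le> dist x y \<and> dist x y < \<epsilon> + \<delta> \<longrightarrow> \<alpha> x y * dist (T x) (T y) < \<epsilon>"
    using assms unfolding alpha_MK_contractive_def by blast
  have "dist (T x) (T y) < \<epsilon>" if "1 \<le> \<alpha> x y" "dist x y < \<epsilon> + \<delta>" for x y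
  proof (cases "\<epsilon> \<le> dist x y")
    case True
    then have "\<alpha> x y * dist (T x) (T y) < \<epsilon>" using MK that(2) by blast
    moreover have "dist (T x) (T y) \<le> \<alpha> x y * dist (T x) (T y)"
      using that(1) by (simp add: mult_le_cancel_right1)
    ultimately show ?thesis by linarith
  next
    case False
    then show ?thesis using alpha_MK_contractive_dist_le[OF assms(1) that(1)] by linarith
  qed
  with \<open>\<delta> > 0\<close> show thesis using that by blast
qed

lemma alpha_admissible_orbit:
  assumes "alpha_admissible \<alpha> T" and "1 \<le> \<alpha> x0 (T x0)"
  shows "1 \<le> \<alpha> ((T ^^ n) x0) ((T ^^ Suc n) x0)"
  using assms unfolding alpha_admissible_def by (induction n) auto

lemma N_transitive_chain:
  assumes "N_transitive N \<alpha>" and related: "\<And>n. 1 \<le> \<alpha> (x n) (x (Suc n))"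
  shows "1 \<le> \<alpha> (x n) (x (n + 1 + k * N))"
proof (induction k arbitrary: n)
  case 0
  then show ?case using related by simp
next
  case (Suc k)
  define y where "y i = (if i \<le> N then x (n + i) else x (n + 1 + Suc k * N))" for i
  have "1 \<le> \<alpha> (y i) (y (Suc i))" if "i \<le> N" for i
  proof (cases "i < N")
    case True
    then show ?thesis using related[of "n + i"] by (simp add: y_def)
  next
    case False
    with that have "i = N" by simp
    then show ?thesis using Suc[of "n + N"] by (simp add: y_def algebra_simps)
  qed
  then have "1 \<le> \<alpha> (y 0) (y (Suc N))"
    using assms(1) unfolding N_transitive_def by blast
  then show ?case by (simp add: y_def)
qed

lemma dist_le_of_steps_le:
  fixes x :: "nat \<Rightarrow> 'a::metric_space"
  assumes "\<And>n. n \<ge> K \<Longrightarrow> dist (x n) (x (Suc n)) \<le> \<eta>"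
  shows "dist (x K) (x (K + j)) \<le> j * \<eta>"
proof (induction j)
  case (Suc j)
  have "dist (x K) (x (K + Suc j)) \<le> dist (x K) (x (K + j)) + dist (x (K + j)) (x (K + Suc j))"
    by (rule dist_triangle)
  also have "\<dots> \<le> j * \<eta> + \<eta>" using Suc assms[of "K + j"] by simp
  finally show ?case by (simp add: algebra_simps)
qed simp

context
  fixes T :: "'a::metric_space \<Rightarrow> 'a" and \<alpha> :: "'a \<Rightarrow> 'a \<Rightarrow> real" and x :: "nat \<Rightarrow> 'a"
  assumes MK: "alpha_MK_contractive \<alpha> T"
    and orbit_Suc: "\<And>n. x (Suc n) = T (x n)"
begin

lemma orbit_dist_shift_le:
  assumes "\<And>n. 1 \<le> \<alpha> (x n) (x (n + p))"
  shows "dist (x (n + j)) (x (n + p + j)) \<le> dist (x n) (x (n + p))"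
proof (induction j)
  case (Suc j)
  have "dist (x (n + Suc j)) (x (n + p + Suc j)) = dist (T (x (n + j))) (T (x (n + j + p)))"
    by (simp add: orbit_Suc[symmetric] algebra_simps)
  also have "\<dots> \<le> dist (x (n + j)) (x (n + p + j))"
    using alpha_MK_contractive_dist_le[OF MK assms[of "n + j"]] by (simp add: algebra_simps)
  finally show ?case using Suc by simp
qed simp

lemma orbit_dist_Suc_tendsto_0:
  assumes related: "\<And>n. 1 \<le> \<alpha> (x n) (x (Suc n))"
  shows "(\<lambda>n. dist (x n) (x (Suc n))) \<longlonglongrightarrow> 0"
proof -
  define d where "d n = dist (x n) (x (Suc n))" for n
  have "decseq d"
    using orbit_dist_shift_le[of 1 _ 1] related by (intro decseq_SucI) (simp add: d_def)
  then obtain r where r: "d \<longlonglongrightarrow> r" "\<And>n. r \<le> d n"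
    using decseq_convergent[of d 0] by (auto simp: d_def)
  have "r \<le> 0"
  proof (rule ccontr)
    assume "\<not> r \<le> 0"
    then have "r > 0" by simp
    then obtain \<delta> where "\<delta> > 0"
      and contr: "\<And>a b. 1 \<le> \<alpha> a b \<Longrightarrow> dist a b < r + \<delta> \<Longrightarrow> dist (T a) (T b) < r"
      using alpha_MK_contractiveD[OF MK] by blast
    obtain n where "d n < r + \<delta>"
      using order_tendstoD(2)[OF r(1), of "r + \<delta>"] \<open>\<delta> > 0\<close> by (auto simp: eventually_sequentially)
    then have "d (Suc n) < r"
      using contr[OF related] by (simp add: d_def orbit_Suc)
    with r(2) show False by (simp add: not_less[symmetric])
  qed
  moreover have "r \<ge> 0" using LIMSEQ_le_const[OF r(1), of 0] by (simp add: d_def)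
  ultimately show ?thesis using r(1) by (simp add: d_def[abs_def])
qed

context
  fixes N :: nat
  assumes N_pos: "N \<ge> 1"
    and related_jumps: "\<And>n k. 1 \<le> \<alpha> (x n) (x (n + 1 + k * N))"
begin

text \<open>In the induction step, \<open>x K\<close> to \<open>x (K + N)\<close> costs \<open>\<delta> / 2\<close>, and \<open>x (K + N)\<close> is compared
  with \<open>x (K + 1 + (k + 1) * N)\<close> by shifting the contracted pair \<open>T (x K), T (x (K + 1 + k * N))\<close>
  forward \<open>N - 1\<close> steps.\<close>

lemma orbit_dist_jump_less:
  fixes \<epsilon> \<delta> \<eta> :: real
  assumes "\<epsilon> > 0"
    and contr: "\<And>a b. 1 \<le> \<alpha> a b \<Longrightarrow> dist a b < \<epsilon> + \<delta> \<Longrightarrow> dist (T a) (T b) < \<epsilon>"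
    and steps: "\<And>n. n \<ge> K \<Longrightarrow> dist (x n) (x (Suc n)) \<le> \<eta>"
    and "N * \<eta> \<le> \<delta> / 2"
  shows "dist (x K) (x (K + 1 + k * N)) < \<epsilon> + \<delta> / 2"
proof -
  have "0 \<le> \<eta>" using zero_le_dist[of "x K" "x (Suc K)"] steps[of K] by linarith
  then have "\<eta> \<le> N * \<eta>" using N_pos mult_right_mono[of 1 "real N" \<eta>] by simp
  with \<open>0 \<le> \<eta>\<close> have \<eta>_le: "\<eta> \<le> \<delta> / 2" and \<delta>_nonneg: "\<delta> / 2 \<le> \<delta>"
    using assms(4) by linarith+
  have head: "dist (x K) (x (K + N)) \<le> \<delta> / 2"
    using dist_le_of_steps_le[where x = x and K = K and j = N, OF steps] assms(4) by simp
  show ?thesis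
  proof (induction k)
    case 0
    then show ?case using steps[of K] \<eta>_le assms(1) by simp
  next
    case (Suc k)
    have jumps: "1 \<le> \<alpha> (x n) (x (n + (1 + k * N)))" for n
      using related_jumps[of n k] by (simp only: add.assoc)
    have "dist (x (Suc K)) (x (Suc K + (1 + k * N))) = dist (T (x K)) (T (x (K + 1 + k * N)))"
      by (simp only: orbit_Suc[symmetric] add_Suc add.assoc)
    also have "\<dots> < \<epsilon>"
      by (rule contr[OF related_jumps]) (use Suc \<delta>_nonneg in linarith)
    finally have "dist (x (Suc K)) (x (Suc K + (1 + k * N))) < \<epsilon>" .
    moreover have "dist (x (Suc K + (N - 1))) (x (Suc K + (1 + k * N) + (N - 1)))
        \<le> dist (x (Suc K)) (x (Suc K + (1 + k * N)))"
      by (rule orbit_dist_shift_le[OF jumps])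
    moreover have "Suc K + (N - 1) = K + N" "Suc K + (1 + k * N) + (N - 1) = K + 1 + Suc k * N"
      using N_pos by auto
    ultimately have tail: "dist (x (K + N)) (x (K + 1 + Suc k * N)) < \<epsilon>"
      by (simp only:)
    have "dist (x K) (x (K + 1 + Suc k * N))
        \<le> dist (x K) (x (K + N)) + dist (x (K + N)) (x (K + 1 + Suc k * N))"
      by (rule dist_triangle)
    with head tail show ?case by linarith
  qed
qed

lemma orbit_Cauchy: "Cauchy x"
  unfolding Cauchy_altdef2
proof (intro allI impI)
  fix e :: real
  assume "e > 0"
  define \<epsilon> where "\<epsilon> = e / 2"
  have "\<epsilon> > 0" using \<open>e > 0\<close> by (simp add: \<epsilon>_def)
  obtain \<delta>0 where "\<delta>0 > 0"
    and contr0: "\<And>a b. 1 \<le> \<alpha> a b \<Longrightarrow> dist a b < \<epsilon> + \<delta>0 \<Longrightarrow> dist (T a) (T b) < \<epsilon>"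
    using alpha_MK_contractiveD[OF MK \<open>\<epsilon> > 0\<close>] by blast
  define \<delta> where "\<delta> = min \<delta>0 \<epsilon>"
  have "\<delta> > 0" "\<delta> \<le> \<epsilon>" using \<open>\<delta>0 > 0\<close> \<open>\<epsilon> > 0\<close> by (auto simp: \<delta>_def)
  have contr: "\<And>a b. 1 \<le> \<alpha> a b \<Longrightarrow> dist a b < \<epsilon> + \<delta> \<Longrightarrow> dist (T a) (T b) < \<epsilon>"
    using contr0 by (simp add: \<delta>_def)
  define \<eta> where "\<eta> = \<delta> / (2 * N)"
  have N_\<eta>: "N * \<eta> = \<delta> / 2" using N_pos by (simp add: \<eta>_def)
  have "\<eta> > 0" using \<open>\<delta> > 0\<close> N_pos by (simp add: \<eta>_def)
  have "eventually (\<lambda>n. dist (x n) (x (Suc n)) < \<eta>) sequentially"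
    using orbit_dist_Suc_tendsto_0 related_jumps[of _ 0] \<open>\<eta> > 0\<close> by (intro order_tendstoD) simp_all
  then obtain K where steps: "\<And>n. n \<ge> K \<Longrightarrow> dist (x n) (x (Suc n)) \<le> \<eta>"
    unfolding eventually_sequentially by (meson less_imp_le)
  have tail: "dist (x (K + j)) (x K) < e" for j
  proof (cases "j = 0")
    case False
    define k where "k = (j - 1) div N"
    define q where "q = (j - 1) mod N"
    have j_decomp: "K + j = (K + 1 + k * N) + q"
      using False unfolding k_def q_def by (simp add: div_mult_mod_eq)
    have "q < N" using N_pos by (simp add: q_def)
    have "dist (x (K + 1 + k * N)) (x (K + j)) \<le> q * \<eta>"
      unfolding j_decomp by (rule dist_le_of_steps_le) (simp add: steps)
    also have "\<dots> \<le> N * \<eta>"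
      using \<open>q < N\<close> \<open>\<eta> > 0\<close> by (intro mult_right_mono) simp_all
    finally have "dist (x (K + 1 + k * N)) (x (K + j)) \<le> \<delta> / 2" using N_\<eta> by simp
    moreover have "dist (x K) (x (K + 1 + k * N)) < \<epsilon> + \<delta> / 2"
      by (rule orbit_dist_jump_less[OF \<open>\<epsilon> > 0\<close> contr steps N_\<eta>[THEN eq_refl]])
    moreover have "dist (x K) (x (K + j))
        \<le> dist (x K) (x (K + 1 + k * N)) + dist (x (K + 1 + k * N)) (x (K + j))"
      by (rule dist_triangle)
    ultimately show ?thesis using \<open>\<delta> \<le> \<epsilon>\<close> by (simp add: dist_commute \<epsilon>_def)
  qed (simp add: \<open>e > 0\<close>)
  have "dist (x n) (x K) < e" if "n \<ge> K" for n
    using tail[of "n - K"] that by simp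
  then show "\<exists>K. \<forall>n\<ge>K. dist (x n) (x K) < e" by blast
qed

end

lemma orbit_limit_fixed_point:
  fixes s :: "nat \<Rightarrow> nat"
  assumes "x \<longlonglongrightarrow> z" and "strict_mono s" and "\<And>k. 1 \<le> \<alpha> (x (s k)) z"
  shows "T z = z"
proof -
  have "strict_mono (Suc \<circ> s)" using assms(2) by (simp add: strict_mono_def)
  from LIMSEQ_subseq_LIMSEQ[OF assms(1) this]
  have "(\<lambda>k. x (Suc (s k))) \<longlonglongrightarrow> z" by (simp add: o_def)
  moreover have "(\<lambda>k. x (Suc (s k))) \<longlonglongrightarrow> T z"
  proof (rule tendsto_dist_iff[THEN iffD2], rule Lim_null_comparison)
    show "\<forall>\<^sub>F k in sequentially. norm (dist (x (Suc (s k))) (T z)) \<le> dist (x (s k)) z"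
      using alpha_MK_contractive_dist_le[OF MK assms(3)] by (simp add: orbit_Suc)
    show "(\<lambda>k. dist (x (s k)) z) \<longlonglongrightarrow> 0"
      using LIMSEQ_subseq_LIMSEQ[OF assms(1,2)] unfolding o_def by (rule tendsto_dist_iff[THEN iffD1])
  qed
  ultimately show ?thesis by (rule LIMSEQ_unique[symmetric])
qed

end

theorem theorem3:
  fixes T :: "'a::complete_space \<Rightarrow> 'a" and \<alpha> :: "'a \<Rightarrow> 'a \<Rightarrow> real" and N :: nat
  assumes "N \<ge> 1"
    and "\<forall>x y. \<alpha> x y \<ge> 0"
    and "N_transitive N \<alpha>"
    and "alpha_MK_contractive \<alpha> T"
    and "alpha_admissible \<alpha> T"
    and "\<exists>x0. \<alpha> x0 (T x0) \<ge> 1"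
    and "T_alpha_regular T \<alpha>"
  shows "\<exists>x. T x = x"
proof -
  obtain x0 where "1 \<le> \<alpha> x0 (T x0)" using assms(6) by blast
  define x where "x n = (T ^^ n) x0" for n
  have orbit_Suc: "x (Suc n) = T (x n)" for n by (simp add: x_def)
  have related: "1 \<le> \<alpha> (x n) (x (Suc n))" for n
    using alpha_admissible_orbit[OF assms(5) \<open>1 \<le> \<alpha> x0 (T x0)\<close>] by (simp add: x_def)
  have "Cauchy x"
    using N_transitive_chain[where x = x, OF assms(3) related]
    by (rule orbit_Cauchy[where x = x, OF assms(4) orbit_Suc assms(1)])
  then obtain z where "x \<longlonglongrightarrow> z" using Cauchy_convergent convergent_def by blast
  moreover have "orbital T \<alpha> x" unfolding orbital_def using related by (simp add: x_def)
  ultimately obtain s :: "nat \<Rightarrow> nat" where "strict_mono s" "\<And>k. 1 \<le> \<alpha> (x (s k)) z"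
    using assms(7)[unfolded T_alpha_regular_def, rule_format, of x z] by blast
  then have "T z = z"
    by (rule orbit_limit_fixed_point[where x = x, OF assms(4) orbit_Suc \<open>x \<longlonglongrightarrow> z\<close>])
  then show ?thesis by blast
qed

end
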